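(* For every $n\geq1$ and every $i\in\{1,\dots,N\}$, $$C^{(n+1)}_{-i,i}\cdot v=G_i\, C^{(n)}_{ii}\cdot v-\lambda_i\,C^{(n)}_{-i,i}\cdot v-\sum_{k\in I,\ |k|>i}(-1)^{\bar k}\,C^{(n)}_{k,-k}\cdot v.$$
   Context: Let $N\geq1$, $I=\{-N,\dots,-1,1,\dots,N\}$, and for $k\in I$ put $\bar k=0$ if $k>0$, $\bar k=1$ if $k<0$. The Lie superalgebra $\mathfrak{q}(N)$ over $\mathbb{C}$ is spanned by elements $F_{ij}$ ($i,j\in I$) with $F_{-i,-j}=F_{ij}$ (realized as $F_{ij}=E_{ij}+E_{-i,-j}\in\mathfrak{gl}(N|N)$), $F_{ij}$ of parity $\bar\imath+\bar\jmath\bmod 2$, and supercommutator $$[F_{ij}, F_{kl}] = \delta_{kj} F_{il} - (-1)^{(\bar{\imath}+ \bar{\jmath})(\bar{k} + \bar{l})} \delta_{il} F_{kj} + \delta_{k,-j} F_{-i,l} - (-1)^{(\bar{\imath} + \bar{\jmath})(\bar{k} + \bar{l})} \delta_{-i,l} F_{k,-j}.$$ For $n\geq1$ define $C^{(n)}_{ij}\in U(\mathfrak{q}(N))$ by $$C^{(n)}_{ij} = \sum_{k_1,\ldots,k_{n-1}\in I}F_{ik_1} (-1)^{\bar{k}_1} F_{k_1k_2} (-1)^{\bar{k}_2} \cdots F_{k_{n-2}k_{n-1}} (-1)^{\bar{k}_{n-1}} F_{k_{n-1}j}$$ (so $C^{(1)}_{ij}=F_{ij}$). For $i>0$ let $G_i=F_{-i,i}$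 $(=F_{i,-i})$. Let $V$ be a representation of $\mathfrak{q}(N)$ and $v\in V$ a vector such that $F_{ij}\cdot v=0$ whenever $|i|<|j|$, and $F_{ii}\cdot v=\lambda_i v$ for $i=1,\dots,N$, where $\lambda_1,\dots,\lambda_N\in\mathbb{C}$. *)

theory Defs
  imports Complex_Main
begin

definition idx :: "nat \<Rightarrow> int set" where
  "idx N = {- int N .. int N} - {0}"

definition par :: "int \<Rightarrow> nat" where
  "par k = (if k < 0 then 1 else 0)"

text \<open>A representation of q(N) on a complex vector space V (given by the scalar
  multiplication scale): linear operators rho i j (the action of F_ij) satisfying
  F_{-i,-j} = F_ij and the supercommutator relations of q(N). This is the same as
  a module over the universal enveloping algebra U(q(N)).\<close>
definition qN_rep :: "nat \<Rightarrow> (complex \<Rightarrow> 'v::ab_group_add \<Rightarrow> 'v) \<Rightarrow> (int \<Rightarrow> int \<Rightarrow> 'v \<Rightarrow> 'v) \<Rightarrow> bool" where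
  "qN_rep N scale rho \<longleftrightarrow>
     vector_space scale \<and>
     (\<forall>i\<in>idx N. \<forall>j\<in>idx N. Vector_Spaces.linear scale scale (rho i j)) \<and>
     (\<forall>i\<in>idx N. \<forall>j\<in>idx N. rho (-i) (-j) = rho i j) \<and>
     (\<forall>i\<in>idx N. \<forall>j\<in>idx N. \<forall>k\<in>idx N. \<forall>l\<in>idx N. \<forall>w.
        (let s = ((-1::complex) ^ ((par i + par j) * (par k + par l))) in
         rho i j (rho k l w) - scale s (rho k l (rho i j w)) =
           (if k = j then rho i l w else 0)
           - scale s (if i = l then rho k j w else 0)
           + (if k = - j then rho (- i) l w else 0)
           - scale s (if - i = l then rho k (- j) w else 0)))"

text \<open>Action of C^{(n)}_{ij} on a vector, for n \<ge> 1:
  C^{(1)}_{ij} = F_ij and C^{(n+1)}_{ij} = \<Sum>_{k\<in>I} F_{ik} (-1)^{bar k} C^{(n)}_{kj}.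
  The value at n = 0 is an unused dummy.\<close>
fun Cact :: "nat \<Rightarrow> (complex \<Rightarrow> 'v::ab_group_add \<Rightarrow> 'v) \<Rightarrow> (int \<Rightarrow> int \<Rightarrow> 'v \<Rightarrow> 'v)
              \<Rightarrow> nat \<Rightarrow> int \<Rightarrow> int \<Rightarrow> 'v \<Rightarrow> 'v" where
  "Cact N scale rho 0 i j w = 0"
| "Cact N scale rho (Suc 0) i j w = rho i j w"
| "Cact N scale rho (Suc (Suc n)) i j w =
     (\<Sum>k\<in>idx N. rho i k (scale ((-1) ^ par k) (Cact N scale rho (Suc n) k j w)))"

end

theory Submission imports Defs begin

text \<open>The matrix (C^{(n)}_{cd}) transforms under the adjoint action of q(N) exactly like
  (F_cd): the supercommutator [F_ab, C^{(n)}_{cd}] is given by the defining relation of q(N)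
  with F_cd replaced by C^{(n)}_{cd}. This follows by induction on n from
  C^{(n+1)} = \<Sum>_k F (-1)^{bar k} C^{(n)}, the two correction terms of the induction step
  cancelling. Applied to v it first gives C^{(n)}_{kl} v = 0 for |k| < |l|. Then in
  C^{(n+1)}_{-i,i} v = \<Sum>_k F_{-i,k} (-1)^{bar k} C^{(n)}_{ki} v the terms with |k| < i vanish,
  k = i gives G_i C^{(n)}_{ii} v, k = -i gives -\<lambda>_i C^{(n)}_{-i,i} v, and for |k| > i, since
  F_{-i,k} v = 0, the summand is a commutator equal to C^{(n)}_{-i,i} v - C^{(n)}_{k,-k} v up to
  the sign (-1)^{bar k}; the first parts cancel because \<Sum>_{|k|>i} (-1)^{bar k} = 0.\<close>

definition qsign :: "int \<Rightarrow> complex" where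
  "qsign k = (-1) ^ par k"

definition super_sign :: "int \<Rightarrow> int \<Rightarrow> int \<Rightarrow> int \<Rightarrow> complex" where
  "super_sign a b c d = (-1) ^ ((par a + par b) * (par c + par d))"

lemma finite_idx [simp]: "finite (idx N)"
  by (simp add: idx_def)

lemma uminus_in_idx: "k \<in> idx N \<Longrightarrow> - k \<in> idx N"
  by (auto simp: idx_def)

lemma idx_nonzero: "k \<in> idx N \<Longrightarrow> k \<noteq> 0"
  by (auto simp: idx_def)

lemma super_sign_mult: "super_sign a b c k * super_sign a b k d = super_sign a b c d"
  unfolding super_sign_def par_def
  by (cases "a<0"; cases "b<0"; cases "c<0"; cases "k<0"; cases "d<0") simp_all

lemma super_sign_qsign: "super_sign a b c a * qsign a = super_sign a b c b * qsign b"
  unfolding super_sign_def qsign_def par_def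
  by (cases "a<0"; cases "b<0"; cases "c<0") simp_all

lemma super_sign_qsign_uminus:
  "a \<noteq> 0 \<Longrightarrow> b \<noteq> 0 \<Longrightarrow> super_sign a b c (-a) * qsign (-a) = super_sign a b c (-b) * qsign (-b)"
  unfolding super_sign_def qsign_def par_def
  by (cases "a<0"; cases "b<0"; cases "c<0") simp_all

lemma qsign_uminus: "k \<noteq> 0 \<Longrightarrow> qsign (-k) = - qsign k"
  unfolding qsign_def par_def by auto

lemma sum_qsign_symmetric:
  assumes "\<And>k. k \<in> S \<Longrightarrow> - k \<in> S" and "0 \<notin> S"
  shows "(\<Sum>k\<in>S. qsign k) = 0"
proof -
  have "(\<Sum>k\<in>S. qsign k) = (\<Sum>k\<in>S. qsign (- k))"
    by (rule sum.reindex_bij_witness[of _ uminus uminus]) (auto intro: assms(1))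
  also have "\<dots> = (\<Sum>k\<in>S. - qsign k)"
    using assms(2) by (intro sum.cong refl qsign_uminus) auto
  also have "\<dots> = - (\<Sum>k\<in>S. qsign k)"
    by (simp add: sum_negf)
  finally show ?thesis by simp
qed

locale qN_module =
  fixes N :: nat and scale :: "complex \<Rightarrow> 'v::ab_group_add \<Rightarrow> 'v"
    and rho :: "int \<Rightarrow> int \<Rightarrow> 'v \<Rightarrow> 'v"
  assumes qN_rep: "qN_rep N scale rho"
begin

sublocale vs: vector_space scale
  using qN_rep by (simp add: qN_rep_def)

lemma rho_linear: "a \<in> idx N \<Longrightarrow> b \<in> idx N \<Longrightarrow> Vector_Spaces.linear scale scale (rho a b)"
  using qN_rep by (simp add: qN_rep_def)

lemma rho_add: "a \<in> idx N \<Longrightarrow> b \<in> idx N \<Longrightarrow> rho a b (x + y) = rho a b x + rho a b y"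
  using rho_linear by (simp add: Vector_Spaces.linear_iff)

lemma rho_scale: "a \<in> idx N \<Longrightarrow> b \<in> idx N \<Longrightarrow> rho a b (scale c x) = scale c (rho a b x)"
  using rho_linear by (simp add: Vector_Spaces.linear_iff)

lemma rho_additive: "a \<in> idx N \<Longrightarrow> b \<in> idx N \<Longrightarrow> additive (rho a b)"
  by unfold_locales (simp add: rho_add)

lemma rho_zero: "a \<in> idx N \<Longrightarrow> b \<in> idx N \<Longrightarrow> rho a b 0 = 0"
  using rho_additive additive.zero by blast

lemma rho_diff: "a \<in> idx N \<Longrightarrow> b \<in> idx N \<Longrightarrow> rho a b (x - y) = rho a b x - rho a b y"
  using rho_additive additive.diff by blast

lemma rho_sum: "a \<in> idx N \<Longrightarrow> b \<in> idx N \<Longrightarrow> rho a b (sum f S) = (\<Sum>k\<in>S. rho a b (f k))"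
  using rho_additive additive.sum by blast

lemma rho_uminus: "a \<in> idx N \<Longrightarrow> b \<in> idx N \<Longrightarrow> rho a b (- x) = - rho a b x"
  using rho_diff[of a b 0 x] rho_zero[of a b] by simp

lemma rho_if: "a \<in> idx N \<Longrightarrow> b \<in> idx N \<Longrightarrow> rho a b (if P then x else 0) = (if P then rho a b x else 0)"
  by (simp add: rho_zero)

lemma rho_uminus_uminus: "a \<in> idx N \<Longrightarrow> b \<in> idx N \<Longrightarrow> rho (- a) (- b) = rho a b"
  using qN_rep by (simp add: qN_rep_def)

text \<open>The right-hand side of the defining relation F_ab F_cd - (\<plusminus>) F_cd F_ab = \<dots> of q(N),
  with an arbitrary matrix X of operators in place of F; X is covariant if it satisfies
  this relation in the place of F_cd.\<close>
definition comm_rhs :: "(int \<Rightarrow> int \<Rightarrow> 'v \<Rightarrow> 'v) \<Rightarrow> int \<Rightarrow> int \<Rightarrow> int \<Rightarrow> int \<Rightarrow> 'v \<Rightarrow> 'v" where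
  "comm_rhs X a b c d w =
     (if c = b then X a d w else 0)
     - scale (super_sign a b c d) (if a = d then X c b w else 0)
     + (if c = - b then X (- a) d w else 0)
     - scale (super_sign a b c d) (if - a = d then X c (- b) w else 0)"

definition covariant :: "(int \<Rightarrow> int \<Rightarrow> 'v \<Rightarrow> 'v) \<Rightarrow> bool" where
  "covariant X \<longleftrightarrow> (\<forall>a\<in>idx N. \<forall>b\<in>idx N. \<forall>c\<in>idx N. \<forall>d\<in>idx N. \<forall>w.
     rho a b (X c d w) = scale (super_sign a b c d) (X c d (rho a b w)) + comm_rhs X a b c d w)"

lemma covariantD:
  "covariant X \<Longrightarrow> a \<in> idx N \<Longrightarrow> b \<in> idx N \<Longrightarrow> c \<in> idx N \<Longrightarrow> d \<in> idx N \<Longrightarrow>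
    rho a b (X c d w) = scale (super_sign a b c d) (X c d (rho a b w)) + comm_rhs X a b c d w"
  unfolding covariant_def by blast

lemma covariant_rho: "covariant rho"
  using qN_rep unfolding covariant_def qN_rep_def comm_rhs_def super_sign_def Let_def
  by (simp add: algebra_simps)

definition Fmul :: "(int \<Rightarrow> int \<Rightarrow> 'v \<Rightarrow> 'v) \<Rightarrow> int \<Rightarrow> int \<Rightarrow> 'v \<Rightarrow> 'v" where
  "Fmul X c d w = (\<Sum>k\<in>idx N. rho c k (scale (qsign k) (X k d w)))"

abbreviation C :: "nat \<Rightarrow> int \<Rightarrow> int \<Rightarrow> 'v \<Rightarrow> 'v" where
  "C \<equiv> Cact N scale rho"

lemma C_Suc_Suc: "C (Suc (Suc n)) = Fmul (C (Suc n))"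
  by (simp add: fun_eq_iff Fmul_def qsign_def)

lemma sum_if_const: "(\<Sum>k\<in>S. if P then f k else 0) = (if P then \<Sum>k\<in>S. f k else 0)"
  by simp

lemma scale_if: "scale x (if P then y else 0) = (if P then scale x y else 0)"
  by simp

lemma sum_comm_rhs_rho:
  assumes a: "a \<in> idx N" and b: "b \<in> idx N" and c: "c \<in> idx N"
  shows "(\<Sum>k\<in>idx N. comm_rhs rho a b c k (scale (qsign k) (X k d w))) =
      (if c = b then Fmul X a d w else 0)
      - scale (super_sign a b c a * qsign a) (rho c b (X a d w))
      + (if c = - b then Fmul X (- a) d w else 0)
      - scale (super_sign a b c (- a) * qsign (- a)) (rho c (- b) (X (- a) d w))"
proof -
  let ?Y = "\<lambda>k. scale (qsign k) (X k d w)"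
  have na: "- a \<in> idx N" and nb: "- b \<in> idx N"
    using a b by (auto intro: uminus_in_idx)
  have "(\<Sum>k\<in>idx N. comm_rhs rho a b c k (?Y k)) =
      (\<Sum>k\<in>idx N. if c = b then rho a k (?Y k) else 0)
      - (\<Sum>k\<in>idx N. if a = k then scale (super_sign a b c k) (rho c b (?Y k)) else 0)
      + (\<Sum>k\<in>idx N. if c = - b then rho (- a) k (?Y k) else 0)
      - (\<Sum>k\<in>idx N. if - a = k then scale (super_sign a b c k) (rho c (- b) (?Y k)) else 0)"
    unfolding comm_rhs_def by (simp add: sum.distrib sum_subtractf scale_if del: vs.scale_eq_0_iff)
  also have "\<dots> = (if c = b then Fmul X a d w else 0) - scale (super_sign a b c a) (rho c b (?Y a))
      + (if c = - b then Fmul X (- a) d w else 0) - scale (super_sign a b c (- a)) (rho c (- b) (?Y (- a)))"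
    unfolding sum_if_const Fmul_def using a na by simp
  finally show ?thesis
    by (simp add: rho_scale[OF c b] rho_scale[OF c nb])
qed

lemma sum_comm_rhs_X:
  assumes a: "a \<in> idx N" and b: "b \<in> idx N" and c: "c \<in> idx N"
  shows "(\<Sum>k\<in>idx N. scale (super_sign a b c k * qsign k) (rho c k (comm_rhs X a b k d w))) =
      scale (super_sign a b c b * qsign b) (rho c b (X a d w))
      - (if a = d then scale (super_sign a b c d) (Fmul X c b w) else 0)
      + scale (super_sign a b c (- b) * qsign (- b)) (rho c (- b) (X (- a) d w))
      - (if - a = d then scale (super_sign a b c d) (Fmul X c (- b) w) else 0)"
proof -
  let ?\<sigma> = "super_sign a b c d"
  have nb: "- b \<in> idx N" and bnz: "b \<noteq> 0"
    using uminus_in_idx[OF b] idx_nonzero[OF b] .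
  have summand: "scale (super_sign a b c k * qsign k) (rho c k (comm_rhs X a b k d w)) =
      (if k = b then scale (super_sign a b c b * qsign b) (rho c b (X a d w)) else 0)
      - (if a = d then scale ?\<sigma> (rho c k (scale (qsign k) (X k b w))) else 0)
      + (if k = - b then scale (super_sign a b c (- b) * qsign (- b)) (rho c (- b) (X (- a) d w)) else 0)
      - (if - a = d then scale ?\<sigma> (rho c k (scale (qsign k) (X k (- b) w))) else 0)"
    if k: "k \<in> idx N" for k
  proof -
    have sign: "super_sign a b c k * qsign k * super_sign a b k d = ?\<sigma> * qsign k"
      using super_sign_mult[of a b c k d] by (simp add: algebra_simps)
    show ?thesis unfolding comm_rhs_def
      by (simp add: rho_add[OF c k] rho_diff[OF c k] rho_scale[OF c k] rho_if[OF c k]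
          rho_scale[OF c b] rho_scale[OF c nb] vs.scale_right_distrib
          vs.scale_right_diff_distrib scale_if sign super_sign_mult bnz
          del: vs.scale_eq_0_iff)
  qed
  have "(\<Sum>k\<in>idx N. scale (super_sign a b c k * qsign k) (rho c k (comm_rhs X a b k d w))) =
      (\<Sum>k\<in>idx N. if k = b then scale (super_sign a b c b * qsign b) (rho c b (X a d w)) else 0)
      - (\<Sum>k\<in>idx N. if a = d then scale ?\<sigma> (rho c k (scale (qsign k) (X k b w))) else 0)
      + (\<Sum>k\<in>idx N. if k = - b then scale (super_sign a b c (- b) * qsign (- b)) (rho c (- b) (X (- a) d w)) else 0)
      - (\<Sum>k\<in>idx N. if - a = d then scale ?\<sigma> (rho c k (scale (qsign k) (X k (- b) w))) else 0)"
    by (simp add: summand sum.distrib sum_subtractf del: vs.scale_eq_0_iff)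
  also have "\<dots> = scale (super_sign a b c b * qsign b) (rho c b (X a d w))
      - (if a = d then scale ?\<sigma> (Fmul X c b w) else 0)
      + scale (super_sign a b c (- b) * qsign (- b)) (rho c (- b) (X (- a) d w))
      - (if - a = d then scale ?\<sigma> (Fmul X c (- b) w) else 0)"
    unfolding sum_if_const Fmul_def using b nb by (simp add: vs.scale_sum_right)
  finally show ?thesis .
qed

lemma covariant_Fmul:
  assumes X: "covariant X"
  shows "covariant (Fmul X)"
  unfolding covariant_def
proof (intro ballI allI)
  fix a b c d w
  assume a: "a \<in> idx N" and b: "b \<in> idx N" and c: "c \<in> idx N" and d: "d \<in> idx N"
  let ?\<sigma> = "super_sign a b c d"
  let ?Y = "\<lambda>k. scale (qsign k) (X k d w)"
  let ?B = "\<lambda>k. scale (super_sign a b c k * qsign k) (rho c k (comm_rhs X a b k d w))"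
  let ?R = "\<lambda>k. comm_rhs rho a b c k (?Y k)"
  have summand: "rho a b (rho c k (?Y k)) =
      scale ?\<sigma> (rho c k (scale (qsign k) (X k d (rho a b w)))) + (?B k + ?R k)"
    if k: "k \<in> idx N" for k
  proof -
    have "rho a b (?Y k) =
        scale (qsign k) (scale (super_sign a b k d) (X k d (rho a b w)) + comm_rhs X a b k d w)"
      using covariantD[OF X a b k d] by (simp add: rho_scale[OF a b])
    then have "rho c k (rho a b (?Y k)) =
        scale (qsign k * super_sign a b k d) (rho c k (X k d (rho a b w)))
        + scale (qsign k) (rho c k (comm_rhs X a b k d w))"
      by (simp add: rho_add[OF c k] rho_scale[OF c k] vs.scale_right_distrib)
    moreover have "super_sign a b c k * (qsign k * super_sign a b k d) = ?\<sigma> * qsign k"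
      using super_sign_mult[of a b c k d] by (simp add: algebra_simps)
    ultimately show ?thesis
      using covariantD[OF covariant_rho a b c k, of "?Y k"]
      by (simp add: vs.scale_right_distrib rho_scale[OF c k] algebra_simps)
  qed
  have "rho a b (Fmul X c d w) = (\<Sum>k\<in>idx N. rho a b (rho c k (?Y k)))"
    unfolding Fmul_def by (simp add: rho_sum[OF a b])
  also have "\<dots> = scale ?\<sigma> (Fmul X c d (rho a b w)) + ((\<Sum>k\<in>idx N. ?B k) + (\<Sum>k\<in>idx N. ?R k))"
    unfolding Fmul_def by (simp add: summand sum.distrib vs.scale_sum_right)
  also have "(\<Sum>k\<in>idx N. ?B k) + (\<Sum>k\<in>idx N. ?R k) = comm_rhs (Fmul X) a b c d w"
    unfolding sum_comm_rhs_X[OF a b c] sum_comm_rhs_rho[OF a b c]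
      super_sign_qsign[of a b c]
      super_sign_qsign_uminus[OF idx_nonzero[OF a] idx_nonzero[OF b]]
    by (simp add: comm_rhs_def algebra_simps)
  finally show "rho a b (Fmul X c d w) = scale ?\<sigma> (Fmul X c d (rho a b w)) + comm_rhs (Fmul X) a b c d w" .
qed

lemma covariant_C: "covariant (C (Suc n))"
proof (induction n)
  case 0
  show ?case using covariant_rho by simp
next
  case (Suc n)
  then show ?case unfolding C_Suc_Suc by (rule covariant_Fmul)
qed

lemma C_scale: "c \<in> idx N \<Longrightarrow> d \<in> idx N \<Longrightarrow> C (Suc n) c d (scale x w) = scale x (C (Suc n) c d w)"
proof (induction n arbitrary: c d)
  case 0
  then show ?case by (simp add: rho_scale)
next
  case (Suc n)
  then show ?case unfolding C_Suc_Suc Fmul_def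
    by (auto simp: rho_scale vs.scale_left_commute[of x] vs.scale_sum_right intro!: sum.cong)
qed

lemma C_zero: "c \<in> idx N \<Longrightarrow> d \<in> idx N \<Longrightarrow> C (Suc n) c d 0 = 0"
  using C_scale[of c d n 0 0] by simp

lemma rho_C_annihilated:
  assumes "rho a b u = 0" and "a \<in> idx N" "b \<in> idx N" "c \<in> idx N" "d \<in> idx N"
  shows "rho a b (C (Suc n) c d u) = comm_rhs (C (Suc n)) a b c d u"
  using covariantD[OF covariant_C, of a b c d n u] assms by (simp add: C_zero)

lemma C_vanish:
  assumes hv: "\<And>a b. a \<in> idx N \<Longrightarrow> b \<in> idx N \<Longrightarrow> \<bar>a\<bar> < \<bar>b\<bar> \<Longrightarrow> rho a b v = 0"
  shows "k \<in> idx N \<Longrightarrow> l \<in> idx N \<Longrightarrow> \<bar>k\<bar> < \<bar>l\<bar> \<Longrightarrow> C (Suc n) k l v = 0"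
proof (induction n arbitrary: k l)
  case 0
  then show ?case using hv by simp
next
  case (Suc n)
  note k = Suc.prems(1) and l = Suc.prems(2) and kl = Suc.prems(3)
  have "rho k m (C (Suc n) m l v) = 0" if m: "m \<in> idx N" for m
  proof (cases "\<bar>m\<bar> < \<bar>l\<bar>")
    case True
    then show ?thesis using Suc.IH[OF m l] by (simp add: rho_zero[OF k m])
  next
    case False
    then have "rho k m v = 0" using hv[OF k m] kl by simp
    then show ?thesis
      using rho_C_annihilated[OF _ k m m l] Suc.IH[OF k l kl] kl idx_nonzero[OF m]
      by (auto simp: comm_rhs_def)
  qed
  then show ?case by (simp add: C_Suc_Suc Fmul_def rho_scale[OF k])
qed

lemma rho_diag_C_eigen:
  assumes "rho i i v = scale \<mu> v" and i: "i \<in> idx N"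
  shows "rho i i (C (Suc m) (- i) i v) = scale \<mu> (C (Suc m) (- i) i v)"
proof -
  have ni: "- i \<in> idx N" using uminus_in_idx[OF i] .
  have "super_sign i i (- i) i = 1" by (simp add: super_sign_def)
  then show ?thesis
    using covariantD[OF covariant_C i i ni i, of m v] assms idx_nonzero[OF i]
    by (simp add: comm_rhs_def C_scale[OF ni i])
qed

lemma rho_C_annihilated_outer:
  assumes "rho (- i) k v = 0" and "0 < i" and i: "i \<in> idx N" and k: "k \<in> idx N"
  shows "rho (- i) k (C (Suc m) k i v) = C (Suc m) (- i) i v - C (Suc m) k (- k) v"
proof -
  have "super_sign (- i) k k i = 1"
    using \<open>0 < i\<close> by (cases "k < 0") (simp_all add: super_sign_def par_def)
  then show ?thesis
    using rho_C_annihilated[OF assms(1) uminus_in_idx[OF i] k k i, of m]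
      \<open>0 < i\<close> idx_nonzero[OF k]
    by (simp add: comm_rhs_def)
qed

lemma C_Suc_minus_diag:
  assumes hv: "\<And>a b. a \<in> idx N \<Longrightarrow> b \<in> idx N \<Longrightarrow> \<bar>a\<bar> < \<bar>b\<bar> \<Longrightarrow> rho a b v = 0"
    and hl: "rho i i v = scale \<mu> v"
    and i: "i \<in> idx N" and "0 < i"
  shows "C (Suc (Suc m)) (- i) i v =
           rho (- i) i (C (Suc m) i i v)
           - scale \<mu> (C (Suc m) (- i) i v)
           - (\<Sum>k\<in>{k\<in>idx N. \<bar>k\<bar> > i}. scale (qsign k) (C (Suc m) k (- k) v))"
proof -
  let ?C = "C (Suc m)"
  let ?S = "{k\<in>idx N. \<bar>k\<bar> > i}"
  have ni: "- i \<in> idx N" using uminus_in_idx[OF i] .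
  have qsign_i: "qsign i = 1" and qsign_ni: "qsign (- i) = -1"
    using \<open>0 < i\<close> by (auto simp: qsign_def par_def)
  define T where "T k = (if k = i then rho (- i) i (?C i i v) else 0)
      - (if k = - i then scale \<mu> (?C (- i) i v) else 0)
      + (if \<bar>k\<bar> > i then scale (qsign k) (?C (- i) i v) else 0)
      - (if \<bar>k\<bar> > i then scale (qsign k) (?C k (- k) v) else 0)"
    for k
  have summand: "rho (- i) k (scale (qsign k) (?C k i v)) = T k" if k: "k \<in> idx N" for k
  proof -
    consider "k = i" | "k = - i" | "\<bar>k\<bar> < i" | "\<bar>k\<bar> > i" by linarith
    then show ?thesis
    proof cases
      case 1
      then show ?thesis using \<open>0 < i\<close> by (simp add: T_def qsign_i)
    next
      case 2
      then show ?thesis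
        using \<open>0 < i\<close> rho_diag_C_eigen[OF hl i, of m] rho_uminus_uminus[OF i i]
        by (simp add: T_def qsign_ni rho_scale[OF ni ni] rho_uminus[OF i i])
    next
      case 3
      then show ?thesis
        using C_vanish[OF hv k i, where n = m] \<open>0 < i\<close> by (auto simp: T_def rho_zero[OF ni k])
    next
      case 4
      then have "rho (- i) k v = 0" using hv[OF ni k] \<open>0 < i\<close> by simp
      moreover have "k \<noteq> i" "k \<noteq> - i" using 4 \<open>0 < i\<close> by auto
      ultimately show ?thesis
        using rho_C_annihilated_outer[OF _ \<open>0 < i\<close> i k, where m = m] 4
        by (simp add: T_def rho_scale[OF ni k] vs.scale_right_diff_distrib)
    qed
  qed
  have sum_qsign_S: "(\<Sum>k\<in>?S. qsign k) = 0"
    by (rule sum_qsign_symmetric) (auto simp: idx_def)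
  have "C (Suc (Suc m)) (- i) i v = (\<Sum>k\<in>idx N. T k)"
    unfolding C_Suc_Suc Fmul_def by (rule sum.cong) (simp_all add: summand)
  also have "\<dots> = rho (- i) i (?C i i v) - scale \<mu> (?C (- i) i v)
      + ((\<Sum>k\<in>?S. scale (qsign k) (?C (- i) i v)) - (\<Sum>k\<in>?S. scale (qsign k) (?C k (- k) v)))"
    unfolding T_def using i ni
    by (simp add: sum.distrib sum_subtractf sum.inter_filter del: vs.scale_eq_0_iff)
  also have "(\<Sum>k\<in>?S. scale (qsign k) (?C (- i) i v)) = 0"
    using sum_qsign_S by (simp add: vs.scale_sum_left[symmetric])
  finally show ?thesis by simp
qed

end

theorem mainTheorem7:
  fixes N :: nat and scale :: "complex \<Rightarrow> 'v::ab_group_add \<Rightarrow> 'v"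
    and rho :: "int \<Rightarrow> int \<Rightarrow> 'v \<Rightarrow> 'v" and v :: 'v and lam :: "int \<Rightarrow> complex"
    and n :: nat and i :: int
  assumes "N \<ge> 1"
    and "qN_rep N scale rho"
    and "\<And>a b. a \<in> idx N \<Longrightarrow> b \<in> idx N \<Longrightarrow> \<bar>a\<bar> < \<bar>b\<bar> \<Longrightarrow> rho a b v = 0"
    and "\<And>a. 1 \<le> a \<Longrightarrow> a \<le> int N \<Longrightarrow> rho a a v = scale (lam a) v"
    and "n \<ge> 1"
    and "1 \<le> i" and "i \<le> int N"
  shows "Cact N scale rho (n + 1) (- i) i v =
           rho (- i) i (Cact N scale rho n i i v)
           - scale (lam i) (Cact N scale rho n (- i) i v)
           - (\<Sum>k\<in>{k\<in>idx N. \<bar>k\<bar> > i}. scale ((-1) ^ par k) (Cact N scale rho n k (- k) v))"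
proof -
  interpret qN_module N scale rho
    by (rule qN_module.intro) (fact assms(2))
  obtain m where n: "n = Suc m"
    using \<open>n \<ge> 1\<close> by (cases n) auto
  have i: "i \<in> idx N"
    using \<open>1 \<le> i\<close> \<open>i \<le> int N\<close> by (auto simp: idx_def)
  show ?thesis
    using C_Suc_minus_diag[OF assms(3) assms(4)[OF \<open>1 \<le> i\<close> \<open>i \<le> int N\<close>] i] \<open>1 \<le> i\<close>
    unfolding n qsign_def by simp
qed

end
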